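(* For all nonnegative integers $k$, $n$, and $r$, \[ \sum_{i=0}^k\binom{(r+1)i+n}{i} \;=\; \sum_{\alpha \in \mathcal{C}(k, r)} (-1)^{|\alpha|-\ell(\alpha)} \Biggl(\prod_{j=1}^{\ell(\alpha)}\binom{r}{\alpha_j-1}\Biggr)\binom{(r+1)k+n+1-|\alpha|+\ell(\alpha)}{k-|\alpha|}. \]
   Context: A composition $\alpha=(\alpha_1,\dots,\alpha_j)$ of an integer $m\ge 0$ is a finite sequence of positive integers summing to $m$; the empty composition $()$ is the unique composition of $0$. Write $|\alpha|$ for the sum of the parts and $\ell(\alpha)$ for the number of parts. For integers $m\ge 0$ and $r \geq 0$, let $c(m,r)$ be the set of compositions $\alpha$ of $m$ with $2\le \alpha_i\le r+1$ for all $1 \leq i \leq \ell(\alpha)$, and let $\mathcal{C}(k,r)=\bigcup_{m=0}^k c(m,r)$. The empty product equals $1$. *)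

theory Defs
  imports Main
begin

definition comp_c :: "nat \<Rightarrow> nat \<Rightarrow> nat list set" where
  "comp_c m r = {\<alpha>. sum_list \<alpha> = m \<and> (\<forall>a\<in>set \<alpha>. 2 \<le> a \<and> a \<le> r + 1)}"

definition comp_C :: "nat \<Rightarrow> nat \<Rightarrow> nat list set" where
  "comp_C k r = (\<Union>m\<in>{0..k}. comp_c m r)"

end

theory Submission
  imports Defs
begin

text \<open>Write \<open>G k M\<close> (\<open>comp_sum r k M\<close> below) for the right-hand side with
  \<open>(r+1)k+n+1\<close> replaced by a free parameter \<open>M\<close>. Splitting off the first part \<open>j+1\<close>
  of a composition gives the recurrence
  \<open>G k M = C(M,k) + \<Sum>j\<ge>1. (-1)^j C(r,j) G (k-1-j) (M-j)\<close>.
  Together with the alternating convolution \<open>\<Sum>j. (-1)^j C(r,j) C(M+r-j,t-j) = C(M,t)\<close>,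
  strong induction on \<open>t\<close> yields \<open>G (t+1) (M+r+1) = G t M + C(M+r,t+1)\<close>. For
  \<open>M = (r+1)t+n+1\<close> the added term is the \<open>(t+1)\<close>-st summand of the left-hand side,
  so both sides telescope alike.\<close>

text \<open>Coefficients of \<open>x^t\<close> in \<open>(1-x)^r \<cdot> (1-x)^-(M+r-t+1) = (1-x)^-(M-t+1)\<close>.\<close>

lemma alternating_choose_convolution:
  "(\<Sum>j\<le>t. (-1::int)^j * int (r choose j) * int ((M + r - j) choose (t - j))) = int (M choose t)"
proof (induction r arbitrary: M t)
  case 0
  have "(\<Sum>j\<le>t. (-1::int)^j * int (0 choose j) * int ((M - j) choose (t - j)))
      = (\<Sum>j\<le>t. if j = 0 then int (M choose t) else 0)"
    by (rule sum.cong) auto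
  then show ?case by simp
next
  case (Suc r)
  show ?case
  proof (cases t)
    case 0
    then show ?thesis by simp
  next
    case t: (Suc s)
    have shifted: "int (Suc (M + r) choose Suc s)
        + (\<Sum>j\<le>s. (-1::int)^Suc j * int (r choose Suc j) * int ((M + r - j) choose (s - j)))
        = int (Suc M choose Suc s)"
      using Suc.IH[of "Suc M" "Suc s", unfolded sum.atMost_Suc_shift]
      by (simp del: binomial_Suc_Suc)
    have unshifted: "(\<Sum>j\<le>s. (-1::int)^j * int (r choose j) * int ((M + r - j) choose (s - j)))
        = int (M choose s)"
      using Suc.IH[of M s] by simp
    have pascal: "\<And>i. int (Suc r choose Suc i) = int (r choose i) + int (r choose Suc i)"
      by simp
    have "(\<Sum>j\<le>t. (-1::int)^j * int (Suc r choose j) * int ((M + Suc r - j) choose (t - j)))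
        = int (Suc (M + r) choose Suc s)
          + (\<Sum>j\<le>s. (-1::int)^Suc j * int (r choose Suc j) * int ((M + r - j) choose (s - j)))
          - (\<Sum>j\<le>s. (-1::int)^j * int (r choose j) * int ((M + r - j) choose (s - j)))"
      unfolding t sum.atMost_Suc_shift
      by (simp add: pascal sum.distrib sum_subtractf sum_negf algebra_simps del: binomial_Suc_Suc)
    also have "\<dots> = int (Suc M choose Suc s) - int (M choose s)"
      using shifted unshifted by simp
    also have "\<dots> = int (M choose t)"
      using t by simp
    finally show ?thesis .
  qed
qed

lemma alternating_choose_convolution_ends:
  assumes "0 < t"
  shows "int (M choose t) = int ((M + r) choose t)
    + (\<Sum>j\<in>{1..<t}. (-1::int)^j * int (r choose j) * int ((M + r - j) choose (t - j)))
    + (-1)^t * int (r choose t)"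
proof -
  have "{..t} = insert 0 (insert t {1..<t})"
    using assms by auto
  then show ?thesis
    using alternating_choose_convolution[where t = t and r = r and M = M] assms
    by (simp add: algebra_simps)
qed

lemma comp_C_eq:
  "comp_C k r = {\<alpha>. sum_list \<alpha> \<le> k \<and> (\<forall>a\<in>set \<alpha>. 2 \<le> a \<and> a \<le> r + 1)}"
  unfolding comp_C_def comp_c_def by auto

lemma two_length_le_sum_list:
  fixes xs :: "nat list"
  assumes "\<forall>a\<in>set xs. 2 \<le> a"
  shows "2 * length xs \<le> sum_list xs"
  using assms by (induction xs) auto

lemma finite_comp_C: "finite (comp_C k r)"
proof (rule finite_subset)
  show "comp_C k r \<subseteq> {xs. set xs \<subseteq> {0..k} \<and> length xs \<le> k}"
  proof
    fix xs assume "xs \<in> comp_C k r"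
    then have sum_le: "sum_list xs \<le> k" and parts: "\<forall>a\<in>set xs. 2 \<le> a"
      by (auto simp: comp_C_eq)
    have "set xs \<subseteq> {0..k}"
      using sum_le member_le_sum_list[of _ xs] by fastforce
    moreover have "length xs \<le> k"
      using two_length_le_sum_list[OF parts] sum_le by linarith
    ultimately show "xs \<in> {xs. set xs \<subseteq> {0..k} \<and> length xs \<le> k}" by simp
  qed
  show "finite {xs. set xs \<subseteq> {0..k} \<and> length xs \<le> k}"
    by (rule finite_lists_length_le) simp
qed

lemma comp_C_split_first_part:
  "comp_C k r = insert [] (\<Union>j\<in>{1..<k} \<inter> {..r}. Cons (Suc j) ` comp_C (k - Suc j) r)"
proof (rule set_eqI)
  fix xs
  show "xs \<in> comp_C k r \<longleftrightarrow> xs \<in> insert [] (\<Union>j\<in>{1..<k} \<inter> {..r}. Cons (Suc j) ` comp_C (k - Suc j) r)"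
  proof (cases xs)
    case Nil
    then show ?thesis by (simp add: comp_C_eq)
  next
    case (Cons a ys)
    show ?thesis
    proof
      assume "xs \<in> comp_C k r"
      then have "a - 1 \<in> {1..<k} \<inter> {..r}" "xs = Suc (a - 1) # ys" "ys \<in> comp_C (k - Suc (a - 1)) r"
        using Cons by (auto simp: comp_C_eq)
      then show "xs \<in> insert [] (\<Union>j\<in>{1..<k} \<inter> {..r}. Cons (Suc j) ` comp_C (k - Suc j) r)"
        by blast
    qed (use Cons in \<open>auto simp: comp_C_eq\<close>)
  qed
qed

definition comp_term :: "nat \<Rightarrow> nat \<Rightarrow> nat \<Rightarrow> nat list \<Rightarrow> int" where
  "comp_term r k M \<alpha> = (-1::int) ^ (sum_list \<alpha> - length \<alpha>)
     * (\<Prod>j<length \<alpha>. int (r choose (\<alpha> ! j - 1)))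
     * int ((M - sum_list \<alpha> + length \<alpha>) choose (k - sum_list \<alpha>))"

definition comp_sum :: "nat \<Rightarrow> nat \<Rightarrow> nat \<Rightarrow> int" where
  "comp_sum r k M = (\<Sum>\<alpha>\<in>comp_C k r. comp_term r k M \<alpha>)"

lemma comp_term_Cons:
  assumes "ys \<in> comp_C (k - Suc j) r" "j < k" "k \<le> M"
  shows "comp_term r k M (Suc j # ys) = (-1)^j * int (r choose j) * comp_term r (k - Suc j) (M - j) ys"
proof -
  have sum_le: "sum_list ys \<le> k - Suc j" and parts: "\<forall>b\<in>set ys. 2 \<le> b"
    using assms(1) by (auto simp: comp_C_eq)
  have "2 * length ys \<le> sum_list ys"
    using two_length_le_sum_list[OF parts] .
  then have sign: "sum_list (Suc j # ys) - length (Suc j # ys) = j + (sum_list ys - length ys)"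
    by simp
  have top: "M - sum_list (Suc j # ys) + length (Suc j # ys) = M - j - sum_list ys + length ys"
    using sum_le assms by simp
  have bottom: "k - sum_list (Suc j # ys) = k - Suc j - sum_list ys"
    by simp
  have prod: "(\<Prod>i<length (Suc j # ys). int (r choose ((Suc j # ys) ! i - 1)))
      = int (r choose j) * (\<Prod>i<length ys. int (r choose (ys ! i - 1)))"
    by (simp only: length_Cons prod.lessThan_Suc_shift) simp
  show ?thesis
    unfolding comp_term_def sign top bottom prod by (simp add: power_add algebra_simps)
qed

lemma comp_sum_recurrence:
  assumes "k \<le> M"
  shows "comp_sum r k M = int (M choose k)
    + (\<Sum>j\<in>{1..<k}. (-1)^j * int (r choose j) * comp_sum r (k - Suc j) (M - j))"
proof -
  let ?J = "{1..<k} \<inter> {..r}"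
  let ?A = "\<lambda>j. Cons (Suc j) ` comp_C (k - Suc j) r"
  have "comp_sum r k M = comp_term r k M [] + (\<Sum>xs\<in>(\<Union>j\<in>?J. ?A j). comp_term r k M xs)"
    unfolding comp_sum_def comp_C_split_first_part[of k r]
    by (rule sum.insert) (auto simp: finite_comp_C)
  also have "(\<Sum>xs\<in>(\<Union>j\<in>?J. ?A j). comp_term r k M xs) = (\<Sum>j\<in>?J. \<Sum>xs\<in>?A j. comp_term r k M xs)"
    by (rule sum.UNION_disjoint) (auto simp: finite_comp_C)
  also have "\<dots> = (\<Sum>j\<in>?J. (-1)^j * int (r choose j) * comp_sum r (k - Suc j) (M - j))"
  proof (rule sum.cong[OF refl])
    fix j assume j: "j \<in> ?J"
    have "(\<Sum>xs\<in>?A j. comp_term r k M xs)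
        = (\<Sum>ys\<in>comp_C (k - Suc j) r. comp_term r k M (Suc j # ys))"
      by (subst sum.reindex) (auto simp: inj_on_def)
    also have "\<dots> = (\<Sum>ys\<in>comp_C (k - Suc j) r. (-1)^j * int (r choose j) * comp_term r (k - Suc j) (M - j) ys)"
      using j assms by (intro sum.cong refl comp_term_Cons) auto
    finally show "(\<Sum>xs\<in>?A j. comp_term r k M xs) = (-1)^j * int (r choose j) * comp_sum r (k - Suc j) (M - j)"
      by (simp add: comp_sum_def sum_distrib_left)
  qed
  also have "\<dots> = (\<Sum>j\<in>{1..<k}. (-1)^j * int (r choose j) * comp_sum r (k - Suc j) (M - j))"
    by (rule sum.mono_neutral_left) auto
  finally show ?thesis by (simp add: comp_term_def)
qed

lemma comp_sum_0 [simp]: "comp_sum r 0 M = 1"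
  using comp_sum_recurrence[of 0 M r] by simp

lemma comp_sum_Suc:
  "t \<le> M \<Longrightarrow> comp_sum r (Suc t) (M + r + 1) = comp_sum r t M + int ((M + r) choose Suc t)"
proof (induction t arbitrary: M rule: less_induct)
  case (less t)
  let ?c = "\<lambda>j. (-1::int)^j * int (r choose j)"
  show ?case
  proof (cases "t = 0")
    case True
    then show ?thesis
      using comp_sum_recurrence[of 1 "M + r + 1" r] by simp
  next
    case False
    have lhs: "comp_sum r (Suc t) (M + r + 1) = int ((M + r + 1) choose Suc t)
        + (\<Sum>j\<in>{1..<t}. ?c j * comp_sum r (t - j) (M + r + 1 - j)) + ?c t"
      using comp_sum_recurrence[of "Suc t" "M + r + 1" r] less.prems False by simp
    have "comp_sum r (t - j) (M + r + 1 - j) = comp_sum r (t - Suc j) (M - j) + int ((M + r - j) choose (t - j))"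
      if "j \<in> {1..<t}" for j
    proof -
      have "comp_sum r (Suc (t - Suc j)) (M - j + r + 1)
          = comp_sum r (t - Suc j) (M - j) + int ((M - j + r) choose Suc (t - Suc j))"
        using that less.prems by (intro less.IH) auto
      moreover have "Suc (t - Suc j) = t - j" "M - j + r + 1 = M + r + 1 - j" "M - j + r = M + r - j"
        using that less.prems by auto
      ultimately show ?thesis by (simp only:)
    qed
    then have inner: "(\<Sum>j\<in>{1..<t}. ?c j * comp_sum r (t - j) (M + r + 1 - j))
        = (\<Sum>j\<in>{1..<t}. ?c j * comp_sum r (t - Suc j) (M - j))
          + (\<Sum>j\<in>{1..<t}. ?c j * int ((M + r - j) choose (t - j)))"
      by (simp add: sum.distrib[symmetric] distrib_left)
    have rhs: "comp_sum r t M = int (M choose t) + (\<Sum>j\<in>{1..<t}. ?c j * comp_sum r (t - Suc j) (M - j))"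
      using comp_sum_recurrence[of t M r] less.prems by simp
    have "int (M choose t) = int ((M + r) choose t)
        + (\<Sum>j\<in>{1..<t}. ?c j * int ((M + r - j) choose (t - j))) + ?c t"
      using alternating_choose_convolution_ends False by simp
    then show ?thesis
      using lhs inner rhs by simp
  qed
qed

theorem corollary3p2:
  fixes k n r :: nat
  shows "(\<Sum>i=0..k. int (((r+1)*i + n) choose i)) =
    (\<Sum>\<alpha>\<in>comp_C k r.
       (-1::int) ^ (sum_list \<alpha> - length \<alpha>)
       * (\<Prod>j<length \<alpha>. int (r choose (\<alpha> ! j - 1)))
       * int (((r+1)*k + n + 1 - sum_list \<alpha> + length \<alpha>) choose (k - sum_list \<alpha>)))"
proof -
  have "(\<Sum>i=0..k. int (((r+1)*i + n) choose i)) = comp_sum r k ((r+1)*k + n + 1)"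
  proof (induction k)
    case 0
    then show ?case by simp
  next
    case (Suc k)
    have "comp_sum r (Suc k) ((r+1)*k + n + 1 + r + 1)
        = comp_sum r k ((r+1)*k + n + 1) + int (((r+1)*k + n + 1 + r) choose Suc k)"
      by (rule comp_sum_Suc) simp
    then show ?case
      using Suc.IH by (simp add: algebra_simps)
  qed
  then show ?thesis by (simp add: comp_sum_def comp_term_def)
qed

end
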